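(* Let $R$ be a $*$-ring and $a\in R$. The following are equivalent: (1) There exist a projection $e$, a unit $u$ and an integer $m\geq1$ such that $a^m=eu$ and $a,e,u$ pairwise commute. (2) There exist a projection $f$ and a unit $v$ such that $a=f+v$, $fv=vf$ and $af$ is nilpotent. (3) There exists a projection $p$ with $ap=pa$ such that $ap$ is a unit of the corner ring $pRp$ and $a(1-p)$ is nilpotent. (4) There exists $b\in R$ with $ab=ba$ such that $(ab)^*=ab$, $b=bab$ and $a-a^2b$ is nilpotent.
   Context: A $*$-ring is a ring with identity with an involution $*$ ($(x+y)^*=x^*+y^*$, $(xy)^*=y^*x^*$, $(x^* )^*=x$). A projection is $p$ with $p^2=p=p^*$. *)

theory Defs
  imports Main
begin

class star_ring = ring_1 +
  fixes star :: "'a \<Rightarrow> 'a"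
  assumes star_add: "star (x + y) = star x + star y"
      and star_mult: "star (x * y) = star y * star x"
      and star_star: "star (star x) = x"

definition projection :: "'a::star_ring \<Rightarrow> bool" where
  "projection p \<longleftrightarrow> p * p = p \<and> star p = p"

definition unit_elem :: "'a::ring_1 \<Rightarrow> bool" where
  "unit_elem u \<longleftrightarrow> (\<exists>w. u * w = 1 \<and> w * u = 1)"

definition nilpotent :: "'a::ring_1 \<Rightarrow> bool" where
  "nilpotent x \<longleftrightarrow> (\<exists>n::nat. x ^ n = 0)"

text \<open>y is a unit of the corner ring pRp (whose identity is p).\<close>
definition corner_unit :: "'a::ring_1 \<Rightarrow> 'a \<Rightarrow> bool" where
  "corner_unit p y \<longleftrightarrow> y = p * y * p \<and>
     (\<exists>x. x = p * x * p \<and> y * x = p \<and> x * y = p)"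

end

theory Submission
  imports Defs
begin

text \<open>
  All four conditions say that \<open>a\<close> splits, along an idempotent \<open>p\<close> commuting with it, into a
  part \<open>a p\<close> invertible in the corner \<open>pRp\<close> and a nilpotent part \<open>a (1 - p)\<close>; the involution
  only enters through the requirement that the idempotent be self-adjoint. The common pivot is
  that \<open>a p\<close> is a unit of \<open>pRp\<close> exactly when \<open>a p + (1 - p)\<close> is a unit of \<open>R\<close>: the \<open>m\<close>-th
  power of this element is \<open>a\<^sup>m p + (1 - p)\<close>, which links condition (1) to (3); adding the
  nilpotent part to the unit \<open>a p - (1 - p)\<close> links (3) to (2); and the corner inverse of \<open>a p\<close>
  is the element \<open>b\<close> of (4), with \<open>p = a b\<close>.
\<close>

lemma power_mult_commuting:
  fixes x y :: "'a::monoid_mult"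
  assumes "x * y = y * x"
  shows "(x * y) ^ n = x ^ n * y ^ n"
proof (induction n)
  case (Suc n)
  have yx: "y * x ^ n = x ^ n * y"
    using power_commuting_commutes[OF assms] by simp
  have "(x * y) ^ Suc n = x * (y * x ^ n) * y ^ n"
    using Suc by (simp add: mult.assoc)
  also have "\<dots> = x ^ Suc n * y ^ Suc n"
    using yx by (simp add: mult.assoc)
  finally show ?case .
qed simp

lemma idempotent_power:
  fixes e :: "'a::monoid_mult"
  assumes "e * e = e" and "n \<ge> 1"
  shows "e ^ n = e"
  using assms(2)
proof (induction n rule: dec_induct)
  case (step n)
  then show ?case
    using assms(1) by (simp add: power_Suc2)
qed simp

lemma unit_elem_mult:
  fixes u v :: "'a::ring_1"
  assumes "unit_elem u" and "unit_elem v"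
  shows "unit_elem (u * v)"
proof -
  obtain u' v' where "u * u' = 1" "u' * u = 1" "v * v' = 1" "v' * v = 1"
    using assms unfolding unit_elem_def by blast
  moreover have "(u * v) * (v' * u') = u * (v * v') * u'" "(v' * u') * (u * v) = v' * (u' * u) * v"
    by (simp_all only: mult.assoc)
  ultimately have "(u * v) * (v' * u') = 1" "(v' * u') * (u * v) = 1"
    by simp_all
  then show ?thesis
    unfolding unit_elem_def by blast
qed

lemma unit_elem_power:
  fixes u :: "'a::ring_1"
  assumes "unit_elem u"
  shows "unit_elem (u ^ n)"
  using assms left_right_inverse_power unfolding unit_elem_def by blast

lemma unit_elem_of_power:
  fixes z :: "'a::ring_1"
  assumes "unit_elem (z ^ m)" and "m \<ge> 1"
  shows "unit_elem z"
proof -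
  obtain k where m: "m = Suc k"
    using assms(2) by (cases m) auto
  obtain w where w: "z ^ m * w = 1" "w * z ^ m = 1"
    using assms(1) unfolding unit_elem_def by blast
  have right: "z * (z ^ k * w) = 1"
    using w(1) unfolding m power_Suc by (simp only: mult.assoc)
  have left: "(w * z ^ k) * z = 1"
    using w(2) unfolding m power_Suc2 by (simp only: mult.assoc)
  have "w * z ^ k = z ^ k * w"
    by (metis left right mult.assoc mult_1_left mult_1_right)
  then show ?thesis
    using left right unfolding unit_elem_def by metis
qed

lemma unit_inverse_commute:
  fixes u w x :: "'a::ring_1"
  assumes "u * w = 1" and "w * u = 1" and "x * u = u * x"
  shows "x * w = w * x"
proof -
  have "x * w = (w * u) * x * w"
    using assms(2) by simp
  also have "\<dots> = w * (u * x) * w"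
    by (simp only: mult.assoc)
  also have "\<dots> = w * (x * u) * w"
    using assms(3) by metis
  also have "\<dots> = w * x * (u * w)"
    by (simp only: mult.assoc)
  finally show ?thesis
    using assms(1) by simp
qed

lemma one_minus_mult_sum_powers:
  fixes x :: "'a::ring_1"
  shows "(1 - x) * (\<Sum>i<n. x ^ i) = 1 - x ^ n"
    and "(\<Sum>i<n. x ^ i) * (1 - x) = 1 - x ^ n"
proof -
  have "x * (\<Sum>i<n. x ^ i) = (\<Sum>i<n. x ^ i) * x"
    by (simp add: sum_distrib_left sum_distrib_right power_commutes)
  moreover have "(1 - x) * (\<Sum>i<n. x ^ i) = 1 - x ^ n"
  proof (induction n)
    case (Suc n)
    have "(1 - x) * (\<Sum>i<Suc n. x ^ i) = (1 - x) * (\<Sum>i<n. x ^ i) + (1 - x) * x ^ n"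
      by (simp add: distrib_left)
    also have "\<dots> = 1 - x ^ Suc n"
      using Suc by (simp add: left_diff_distrib)
    finally show ?case .
  qed simp
  ultimately show "(1 - x) * (\<Sum>i<n. x ^ i) = 1 - x ^ n"
    and "(\<Sum>i<n. x ^ i) * (1 - x) = 1 - x ^ n"
    by (simp_all add: left_diff_distrib right_diff_distrib)
qed

lemma unit_elem_one_minus_nilpotent:
  fixes x :: "'a::ring_1"
  assumes "nilpotent x"
  shows "unit_elem (1 - x)"
proof -
  obtain n where "x ^ n = 0"
    using assms unfolding nilpotent_def by blast
  then show ?thesis
    using one_minus_mult_sum_powers[of x n] unfolding unit_elem_def by auto
qed

lemma unit_elem_add_nilpotent:
  fixes u x :: "'a::ring_1"
  assumes "unit_elem u" and "nilpotent x" and "u * x = x * u"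
  shows "unit_elem (u + x)"
proof -
  obtain w where w: "u * w = 1" "w * u = 1"
    using assms(1) unfolding unit_elem_def by blast
  have wx: "w * x = x * w"
    using unit_inverse_commute[OF w] assms(3) by simp
  have "nilpotent (- (w * x))"
    using assms(2) power_mult_commuting[OF wx] unfolding nilpotent_def
    by (metis mult_zero_right power_minus)
  then have "unit_elem (1 + w * x)"
    using unit_elem_one_minus_nilpotent by fastforce
  moreover have "u + x = u * (1 + w * x)"
    using w(1) by (simp add: distrib_left flip: mult.assoc)
  ultimately show ?thesis
    using assms(1) unit_elem_mult by metis
qed

subsection \<open>Corners cut out by an idempotent\<close>

lemma idempotent_complement:
  fixes e :: "'a::ring_1"
  assumes "e * e = e"
  shows "(1 - e) * (1 - e) = 1 - e" and "e * (1 - e) = 0" and "(1 - e) * e = 0"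
  using assms by (simp_all add: algebra_simps)

lemma corner_add_complement_mult:
  fixes x y e :: "'a::ring_1"
  assumes e: "e * e = e" and ye: "y * e = e * y"
  shows "(x * e + (1 - e)) * (y * e + (1 - e)) = x * y * e + (1 - e)"
proof -
  have "(x * e + (1 - e)) * (y * e + (1 - e))
      = x * (e * y) * e + x * (e * (1 - e)) + (1 - e) * y * e + (1 - e) * (1 - e)"
    by (simp add: distrib_left distrib_right mult.assoc)
  moreover have "x * (e * y) * e = x * y * e"
    by (metis ye e mult.assoc)
  moreover have "(1 - e) * y * e = 0"
    by (metis ye idempotent_complement(3)[OF e] mult.assoc mult_zero_left)
  ultimately show ?thesis
    using idempotent_complement[OF e] by simp
qed

lemma power_corner_add_complement:
  fixes x e :: "'a::ring_1"
  assumes "e * e = e" and "x * e = e * x"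
  shows "(x * e + (1 - e)) ^ n = x ^ n * e + (1 - e)"
proof (induction n)
  case (Suc n)
  then show ?case
    unfolding power_Suc2 Suc.IH by (simp add: corner_add_complement_mult[OF assms])
qed simp

lemma unit_elem_corner_add_complement:
  fixes u e :: "'a::ring_1"
  assumes e: "e * e = e" and "unit_elem u" and ue: "u * e = e * u"
  shows "unit_elem (u * e + (1 - e))"
proof -
  obtain w where w: "u * w = 1" "w * u = 1"
    using assms(2) unfolding unit_elem_def by blast
  have we: "w * e = e * w"
    using unit_inverse_commute[OF w ue[symmetric]] by simp
  have "(u * e + (1 - e)) * (w * e + (1 - e)) = 1"
    using corner_add_complement_mult[OF e we, of u] w(1) by simp
  moreover have "(w * e + (1 - e)) * (u * e + (1 - e)) = 1"
    using corner_add_complement_mult[OF e ue, of w] w(2) by simp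
  ultimately show ?thesis
    unfolding unit_elem_def by blast
qed

lemma corner_unit_iff_unit_elem_add_complement:
  fixes a e :: "'a::ring_1"
  assumes e: "e * e = e" and ae: "a * e = e * a"
  shows "corner_unit e (a * e) \<longleftrightarrow> unit_elem (a * e + (1 - e))"
proof
  assume "corner_unit e (a * e)"
  then obtain x where x: "x = e * x * e" "a * e * x = e" "x * (a * e) = e"
    unfolding corner_unit_def by blast
  have xe: "x * e = x" and ex: "e * x = x"
    using x(1) e by (metis mult.assoc)+
  have "(a * e + (1 - e)) * (x * e + (1 - e)) = a * x * e + (1 - e)"
    using corner_add_complement_mult[OF e, of x a] xe ex by simp
  moreover have "(x * e + (1 - e)) * (a * e + (1 - e)) = x * a * e + (1 - e)"
    using corner_add_complement_mult[OF e ae, of x] .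
  moreover have "a * x * e = e" and "x * a * e = e"
    using x(2,3) xe ex e by (simp_all add: mult.assoc)
  ultimately show "unit_elem (a * e + (1 - e))"
    unfolding unit_elem_def by auto
next
  define z where "z = a * e + (1 - e)"
  assume "unit_elem (a * e + (1 - e))"
  then obtain w where w: "z * w = 1" "w * z = 1"
    unfolding unit_elem_def z_def by blast
  have ze: "z * e = a * e"
    unfolding z_def using e idempotent_complement[OF e] by (simp add: distrib_right mult.assoc)
  have "e * (a * e) = a * e"
    using e ae by (metis mult.assoc)
  then have ez: "e * z = a * e"
    unfolding z_def using idempotent_complement[OF e] by (simp add: distrib_left)
  have we: "w * e = e * w"
    using unit_inverse_commute[OF w, of e] ze ez by simp
  have ewe: "e * w * e = w * e"
    using e we by (metis mult.assoc)
  have "a * e = e * (a * e) * e"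
    using e ae by (metis mult.assoc)
  moreover have "w * e = e * (w * e) * e"
    using ewe e by (simp add: mult.assoc)
  moreover have "a * e * (w * e) = e"
  proof -
    have "a * e * (w * e) = z * (e * w * e)"
      unfolding ze[symmetric] by (simp only: mult.assoc)
    also have "\<dots> = z * w * e"
      unfolding ewe by (simp only: mult.assoc)
    finally show ?thesis
      using w(1) by simp
  qed
  moreover have "w * e * (a * e) = e"
  proof -
    have "w * e * (a * e) = e * (w * z) * e"
      unfolding ze[symmetric] we by (simp only: mult.assoc)
    then show ?thesis
      using w(2) e by simp
  qed
  ultimately show "corner_unit e (a * e)"
    unfolding corner_unit_def by blast
qed

lemma corner_unit_iff_outer_inverse:
  fixes a e :: "'a::ring_1"
  assumes e: "e * e = e" and ae: "a * e = e * a"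
  shows "corner_unit e (a * e) \<longleftrightarrow> (\<exists>x. a * x = e \<and> x * a = e \<and> x * a * x = x)"
proof
  assume "corner_unit e (a * e)"
  then obtain x where x: "x = e * x * e" "a * e * x = e" "x * (a * e) = e"
    unfolding corner_unit_def by blast
  have xe: "x * e = x" and ex: "e * x = x"
    using x(1) e by (metis mult.assoc)+
  have "a * x = e"
    using x(2) ex by (simp add: mult.assoc)
  moreover have "x * a = e"
    using x(3) xe ae by (metis mult.assoc)
  ultimately show "\<exists>x. a * x = e \<and> x * a = e \<and> x * a * x = x"
    using ex by (metis mult.assoc)
next
  assume "\<exists>x. a * x = e \<and> x * a = e \<and> x * a * x = x"
  then obtain x where x: "a * x = e" "x * a = e" "x * a * x = x"
    by blast
  have xe: "x * e = x" and ex: "e * x = x"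
    using x by (metis mult.assoc)+
  have "a * e = e * (a * e) * e" and "x = e * x * e"
    using e ae xe ex by (metis mult.assoc)+
  moreover have "a * e * x = e" and "x * (a * e) = e"
    using x ex e by (metis mult.assoc)+
  ultimately show "corner_unit e (a * e)"
    unfolding corner_unit_def by blast
qed

subsection \<open>The four conditions for idempotents\<close>

lemma corner_unit_if_power_eq_idempotent_mult_unit:
  fixes a e u :: "'a::ring_1"
  assumes e: "e * e = e" and u: "unit_elem u" and m: "m \<ge> 1"
    and am: "a ^ m = e * u" and ae: "a * e = e * a" and eu: "e * u = u * e"
  shows "corner_unit e (a * e)" and "nilpotent (a * (1 - e))"
proof -
  note ue = eu[symmetric]
  have "a ^ m * e = u * e"
    using am ue e by (metis mult.assoc)
  then have "(a * e + (1 - e)) ^ m = u * e + (1 - e)"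
    using power_corner_add_complement[OF e ae] by simp
  then have "unit_elem (a * e + (1 - e))"
    using unit_elem_corner_add_complement[OF e u ue] unit_elem_of_power m by metis
  then show "corner_unit e (a * e)"
    using corner_unit_iff_unit_elem_add_complement[OF e ae] by simp
  have "a * (1 - e) = (1 - e) * a"
    using ae by (simp add: algebra_simps)
  then have "(a * (1 - e)) ^ m = a ^ m * (1 - e)"
    using power_mult_commuting idempotent_power[OF idempotent_complement(1)[OF e] m] by metis
  also have "\<dots> = u * (e * (1 - e))"
    using am ue by (metis mult.assoc)
  finally show "nilpotent (a * (1 - e))"
    unfolding nilpotent_def idempotent_complement(2)[OF e] by auto
qed

lemma power_eq_idempotent_mult_unit_if_corner_unit:
  fixes a e :: "'a::ring_1"
  assumes e: "e * e = e" and ae: "a * e = e * a"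
    and cu: "corner_unit e (a * e)" and nil: "nilpotent (a * (1 - e))"
  obtains u m where "unit_elem u" "m \<ge> 1" "a ^ m = e * u" "a * u = u * a" "e * u = u * e"
proof -
  obtain n where n: "(a * (1 - e)) ^ n = 0"
    using nil unfolding nilpotent_def by blast
  define m where "m = Suc n"
  have m: "m \<ge> 1"
    by (simp add: m_def)
  have qa: "(1 - e) * a = a * (1 - e)"
    using ae by (simp add: algebra_simps)
  have "a ^ m * (1 - e) = (a * (1 - e)) ^ m"
    using power_mult_commuting[OF qa[symmetric], of m]
      idempotent_power[OF idempotent_complement(1)[OF e] m] by simp
  also have "\<dots> = 0"
    using n by (simp add: m_def)
  finally have ame: "a ^ m * e = a ^ m"
    by (simp add: algebra_simps)
  define u where "u = a ^ m + (1 - e)"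
  have "u = (a * e + (1 - e)) ^ m"
    unfolding u_def power_corner_add_complement[OF e ae] ame ..
  then have "unit_elem u"
    using unit_elem_power cu corner_unit_iff_unit_elem_add_complement[OF e ae] by metis
  have "e * a ^ m = a ^ m"
    using ame power_commuting_commutes[OF ae] by metis
  then have "e * u = a ^ m" and "u * e = a ^ m"
    unfolding u_def using ame idempotent_complement[OF e] by (simp_all add: algebra_simps)
  moreover have "a * u = u * a"
    unfolding u_def using qa by (simp add: algebra_simps power_commutes)
  ultimately show thesis
    using that \<open>unit_elem u\<close> m by simp
qed

lemma corner_unit_complement_if_eq_idempotent_add_unit:
  fixes a f v :: "'a::ring_1"
  assumes f: "f * f = f" and v: "unit_elem v" and fv: "f * v = v * f" and a: "a = f + v"
  shows "a * (1 - f) = (1 - f) * a" and "corner_unit (1 - f) (a * (1 - f))"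
proof -
  have p: "(1 - f) * (1 - f) = 1 - f"
    using idempotent_complement(1)[OF f] .
  have vp: "v * (1 - f) = (1 - f) * v"
    using fv by (simp add: algebra_simps)
  then show ap: "a * (1 - f) = (1 - f) * a"
    unfolding a using f by (simp add: algebra_simps)
  have "a * (1 - f) + (1 - (1 - f)) = v * (1 - f) + (1 - (1 - f))"
    unfolding a using idempotent_complement(2)[OF f] by (simp add: distrib_right)
  then show "corner_unit (1 - f) (a * (1 - f))"
    using corner_unit_iff_unit_elem_add_complement[OF p ap]
      unit_elem_corner_add_complement[OF p v vp] by simp
qed

lemma unit_elem_if_corner_unit:
  fixes a e :: "'a::ring_1"
  assumes e: "e * e = e" and ae: "a * e = e * a"
    and cu: "corner_unit e (a * e)" and nil: "nilpotent (a * (1 - e))"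
  shows "unit_elem (a - (1 - e))"
proof -
  have eae: "e * a * e = e * a"
    using e ae by (metis mult.assoc)
  have "(e - (1 - e)) * (e - (1 - e)) = 1"
    using e by (simp add: algebra_simps)
  then have "unit_elem (e - (1 - e))"
    unfolding unit_elem_def by blast
  moreover have "unit_elem (a * e + (1 - e))"
    using cu corner_unit_iff_unit_elem_add_complement[OF e ae] by simp
  moreover have "a * e - (1 - e) = (a * e + (1 - e)) * (e - (1 - e))"
    using e ae eae by (simp add: algebra_simps flip: mult.assoc)
  ultimately have "unit_elem (a * e - (1 - e))"
    using unit_elem_mult by metis
  moreover have "(a * e - (1 - e)) * (a * (1 - e)) = (a * (1 - e)) * (a * e - (1 - e))"
    using e ae eae by (simp add: algebra_simps flip: mult.assoc)
  ultimately have "unit_elem (a * e - (1 - e) + a * (1 - e))"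
    using unit_elem_add_nilpotent nil by metis
  then show ?thesis
    by (simp add: algebra_simps)
qed

lemma star_one [simp]: "star (1::'a::star_ring) = 1"
  by (metis mult_1_left mult_1_right star_mult star_star)

lemma star_diff: "star (x - y) = star x - (star y :: 'a::star_ring)"
proof -
  have "star (x - y) + star y = star x"
    by (simp flip: star_add)
  then show ?thesis
    by (simp add: eq_diff_eq)
qed

lemma projection_one_minus:
  fixes p :: "'a::star_ring"
  assumes "projection p"
  shows "projection (1 - p)"
  using assms unfolding projection_def by (simp add: star_diff algebra_simps)

lemma projection_idem:
  "projection p \<Longrightarrow> p * p = p"
  unfolding projection_def by simp

lemma power_eq_projection_mult_unit_iff_corner_unit:
  fixes a :: "'a::star_ring"
  shows "(\<exists>e u (m::nat). projection e \<and> unit_elem u \<and> m \<ge> 1 \<and> a ^ m = e * u \<and>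
            a * e = e * a \<and> a * u = u * a \<and> e * u = u * e)
     \<longleftrightarrow> (\<exists>p. projection p \<and> a * p = p * a \<and> corner_unit p (a * p) \<and> nilpotent (a * (1 - p)))"
    (is "?power \<longleftrightarrow> ?corner")
proof
  assume ?power
  then obtain e u m where "projection e" "unit_elem u" "m \<ge> 1" "a ^ m = e * u" "a * e = e * a"
      "e * u = u * e"
    by blast
  with corner_unit_if_power_eq_idempotent_mult_unit[OF projection_idem] show ?corner
    by blast
next
  assume ?corner
  then obtain p where p: "projection p" and ap: "a * p = p * a" and "corner_unit p (a * p)"
      "nilpotent (a * (1 - p))"
    by blast
  then obtain u m where "unit_elem u" "m \<ge> 1" "a ^ m = p * u" "a * u = u * a" "p * u = u * p"
    using power_eq_idempotent_mult_unit_if_corner_unit[OF projection_idem[OF p] ap] by blast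
  with p ap show ?power
    by blast
qed

lemma eq_projection_add_unit_iff_corner_unit:
  fixes a :: "'a::star_ring"
  shows "(\<exists>f v. projection f \<and> unit_elem v \<and> a = f + v \<and> f * v = v * f \<and> nilpotent (a * f))
     \<longleftrightarrow> (\<exists>p. projection p \<and> a * p = p * a \<and> corner_unit p (a * p) \<and> nilpotent (a * (1 - p)))"
    (is "?sum \<longleftrightarrow> ?corner")
proof
  assume ?sum
  then obtain f v where f: "projection f" and "unit_elem v" "a = f + v" "f * v = v * f"
      "nilpotent (a * f)"
    by blast
  with corner_unit_complement_if_eq_idempotent_add_unit[OF projection_idem[OF f]]
    projection_one_minus[OF f]
  show ?corner
    by (intro exI[of _ "1 - f"]) simp
next
  assume ?corner
  then obtain p where p: "projection p" and "a * p = p * a" "corner_unit p (a * p)"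
      "nilpotent (a * (1 - p))"
    by blast
  with unit_elem_if_corner_unit[OF projection_idem[OF p]] projection_one_minus[OF p]
  show ?sum
    by (intro exI[of _ "1 - p"] exI[of _ "a - (1 - p)"]) (simp add: algebra_simps)
qed

lemma corner_unit_iff_selfadjoint_outer_inverse:
  fixes a :: "'a::star_ring"
  shows "(\<exists>p. projection p \<and> a * p = p * a \<and> corner_unit p (a * p) \<and> nilpotent (a * (1 - p)))
     \<longleftrightarrow> (\<exists>b. a * b = b * a \<and> star (a * b) = a * b \<and> b = b * a * b \<and> nilpotent (a - a ^ 2 * b))"
    (is "?corner \<longleftrightarrow> ?inverse")
proof
  assume ?corner
  then obtain p where p: "projection p" and ap: "a * p = p * a" and cu: "corner_unit p (a * p)"
      and nil: "nilpotent (a * (1 - p))"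
    by blast
  obtain b where b: "a * b = p" "b * a = p" "b * a * b = b"
    using cu corner_unit_iff_outer_inverse[OF projection_idem[OF p] ap] by blast
  have "a - a ^ 2 * b = a * (1 - p)"
    using b(1) by (simp add: power2_eq_square mult.assoc right_diff_distrib)
  with b p nil show ?inverse
    unfolding projection_def by (intro exI[of _ b]) simp
next
  assume ?inverse
  then obtain b where ab: "a * b = b * a" and "star (a * b) = a * b" and bab: "b = b * a * b"
      and "nilpotent (a - a ^ 2 * b)"
    by blast
  moreover have idem: "a * b * (a * b) = a * b" and ap: "a * (a * b) = a * b * a"
    using ab bab by (metis mult.assoc)+
  moreover have "corner_unit (a * b) (a * (a * b))"
    using corner_unit_iff_outer_inverse[OF idem ap] ab bab by metis
  moreover have "a * (1 - a * b) = a - a ^ 2 * b"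
    by (simp add: power2_eq_square mult.assoc right_diff_distrib)
  ultimately show ?corner
    unfolding projection_def by (intro exI[of _ "a * b"]) simp
qed

theorem theorem3p2:
  fixes a :: "'a::star_ring"
  shows "((\<exists>e u (m::nat). projection e \<and> unit_elem u \<and> m \<ge> 1 \<and> a ^ m = e * u \<and>
            a * e = e * a \<and> a * u = u * a \<and> e * u = u * e)
       \<longleftrightarrow> (\<exists>f v. projection f \<and> unit_elem v \<and> a = f + v \<and> f * v = v * f \<and> nilpotent (a * f)))
     \<and> ((\<exists>f v. projection f \<and> unit_elem v \<and> a = f + v \<and> f * v = v * f \<and> nilpotent (a * f))
       \<longleftrightarrow> (\<exists>p. projection p \<and> a * p = p * a \<and> corner_unit p (a * p) \<and> nilpotent (a * (1 - p))))
     \<and> ((\<exists>p. projection p \<and> a * p = p * a \<and> corner_unit p (a * p) \<and> nilpotent (a * (1 - p)))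
       \<longleftrightarrow> (\<exists>b. a * b = b * a \<and> star (a * b) = a * b \<and> b = b * a * b \<and> nilpotent (a - a ^ 2 * b)))"
  unfolding power_eq_projection_mult_unit_iff_corner_unit eq_projection_add_unit_iff_corner_unit
    corner_unit_iff_selfadjoint_outer_inverse
  by simp

end
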